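(* Let $(\theta_1,\mathbf{X}_1),\dots,(\theta_B,\mathbf{X}_B)$ be i.i.d. with $\theta_b \sim r$, where $r$ has a density with $r(\theta)>0$ on $\Theta$, and $\mathbf{X}_b\mid\theta_b$ distributed according to the statistical model at $\theta_b$. Let $\mathcal{A}_B$ be the (data-dependent) partition of $\Theta$ produced by TRUST or TRUST++ from these simulations, and for $\theta'\in\Theta$ let $A(\theta')$ be its element containing $\theta'$, $I_{A(\theta')} = \{b : \theta_b \in A(\theta')\}$, $$\widehat H_B(t\mid\theta') = \frac{1}{|I_{A(\theta')}|+1}\Big(\sum_{b\in I_{A(\theta')}}\mathbb{I}\big(\tau(\mathbf{X}_b,\theta_b)\le t\big)+1\Big),$$ $\widehat C_{\theta',B} = \inf\{t:\widehat H_B(t\mid\theta')\ge\alpha\}$, and $\widehat R_B(\mathbf{X}) = \{\theta'\in\Theta : \tau(\mathbf{X},\theta')\ge \widehat C_{\theta',B}\}$. Assume the uniform consistency condition: for every $\varepsilon>0$ and $\delta>0$ there is $B_0$ such that for all $B\ge B_0$, $$\mathbb{P}\Big(\sup_{t\in\mathbb{R},\,\theta'\in\Theta}\big|\widehat H_B(t\mid\theta') - H(t\mid\theta')\big|\le\varepsilon\Big)\ge 1-\delta.$$ Then for every fixed $\theta\in\Theta$, with $\mathbf{X}$ drawn from the model at $\theta$ independently of the simulations, $$\lim_{B\to\infty}\mathbb{P}\big(\theta\in\widehat R_B(\mathbf{X})\mid\theta\big) = 1-\alpha.$$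
   Context: A statistical model gives, for each parameter $\theta\in\Theta$, a distribution of the data $\mathbf{X}\in\mathcal{X}$; $\alpha\in(0,1)$. A fixed measurable function $\tau:\mathcal{X}\times\Theta\to\mathbb{R}$ (a test statistic) is given; $H(t\mid\theta) := \mathbb{P}(\tau(\mathbf{X},\theta)\le t\mid\theta)$ is continuous in $t$ for every $\theta$. TRUST: a regression tree is fit with input $\theta$ and response $\tau(\mathbf{X},\theta)$ on the pairs $(\theta_b,\tau(\mathbf{X}_b,\theta_b))$; its leaves form a partition of $\Theta$. TRUST++: $K$ such regression trees are fit on bootstrap resamples of the simulated data, and two parameters $\theta,\theta'$ are placed in the same partition element iff they fall in the same leaf in all $K$ trees. In both cases the partition has the property that $\widehat H_B(\cdot\mid\theta') = \widehat H_B(\cdot\mid\theta)$ whenever $\theta'\in A(\theta)$. *)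

theory Defs
  imports "HOL-Probability.Probability"
begin

definition param_space :: "'t::euclidean_space set \<Rightarrow> 't measure" where
  "param_space \<Theta> = restrict_space lborel \<Theta>"

definition prior :: "'t::euclidean_space set \<Rightarrow> ('t \<Rightarrow> real) \<Rightarrow> 't measure" where
  "prior \<Theta> r = density (param_space \<Theta>) (\<lambda>\<theta>. ennreal (r \<theta>))"

definition joint :: "'t::euclidean_space set \<Rightarrow> ('t \<Rightarrow> real) \<Rightarrow> 'x measure \<Rightarrow> ('t \<Rightarrow> 'x measure)
    \<Rightarrow> ('t \<times> 'x) measure" where
  "joint \<Theta> r XM P =
     bind (prior \<Theta> r) (\<lambda>\<theta>. bind (P \<theta>) (\<lambda>x. return (param_space \<Theta> \<Otimes>\<^sub>M XM) (\<theta>, x)))"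

definition sims :: "'t::euclidean_space set \<Rightarrow> ('t \<Rightarrow> real) \<Rightarrow> 'x measure \<Rightarrow> ('t \<Rightarrow> 'x measure)
    \<Rightarrow> nat \<Rightarrow> (nat \<Rightarrow> 't \<times> 'x) measure" where
  "sims \<Theta> r XM P B = PiM {..<B} (\<lambda>_. joint \<Theta> r XM P)"

definition Hmodel :: "('t \<Rightarrow> 'x measure) \<Rightarrow> ('x \<Rightarrow> 't \<Rightarrow> real) \<Rightarrow> real \<Rightarrow> 't \<Rightarrow> real" where
  "Hmodel P \<tau> t \<theta> = measure (P \<theta>) {x \<in> space (P \<theta>). \<tau> x \<theta> \<le> t}"

text \<open>A B s theta' is the element of the data-dependent partition (built from the
  simulation s of size B) that contains theta'.  I_{A(theta')}:\<close>

definition Iset :: "(nat \<Rightarrow> (nat \<Rightarrow> 't \<times> 'x) \<Rightarrow> 't \<Rightarrow> 't set) \<Rightarrow> nat \<Rightarrow> (nat \<Rightarrow> 't \<times> 'x)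
    \<Rightarrow> 't \<Rightarrow> nat set" where
  "Iset A B s \<theta>' = {b. b < B \<and> fst (s b) \<in> A B s \<theta>'}"

definition Hhat :: "('x \<Rightarrow> 't \<Rightarrow> real) \<Rightarrow> (nat \<Rightarrow> (nat \<Rightarrow> 't \<times> 'x) \<Rightarrow> 't \<Rightarrow> 't set) \<Rightarrow> nat
    \<Rightarrow> (nat \<Rightarrow> 't \<times> 'x) \<Rightarrow> real \<Rightarrow> 't \<Rightarrow> real" where
  "Hhat \<tau> A B s t \<theta>' =
     (real (card {b \<in> Iset A B s \<theta>'. \<tau> (snd (s b)) (fst (s b)) \<le> t}) + 1)
       / (real (card (Iset A B s \<theta>')) + 1)"

definition Chat :: "('x \<Rightarrow> 't \<Rightarrow> real) \<Rightarrow> (nat \<Rightarrow> (nat \<Rightarrow> 't \<times> 'x) \<Rightarrow> 't \<Rightarrow> 't set) \<Rightarrow> real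
    \<Rightarrow> nat \<Rightarrow> (nat \<Rightarrow> 't \<times> 'x) \<Rightarrow> 't \<Rightarrow> ereal" where
  "Chat \<tau> A \<alpha> B s \<theta>' = Inf {ereal t | t. Hhat \<tau> A B s t \<theta>' \<ge> \<alpha>}"

definition Rhat :: "'t set \<Rightarrow> ('x \<Rightarrow> 't \<Rightarrow> real) \<Rightarrow> (nat \<Rightarrow> (nat \<Rightarrow> 't \<times> 'x) \<Rightarrow> 't \<Rightarrow> 't set)
    \<Rightarrow> real \<Rightarrow> nat \<Rightarrow> (nat \<Rightarrow> 't \<times> 'x) \<Rightarrow> 'x \<Rightarrow> 't set" where
  "Rhat \<Theta> \<tau> A \<alpha> B s x = {\<theta>' \<in> \<Theta>. ereal (\<tau> x \<theta>') \<ge> Chat \<tau> A \<alpha> B s \<theta>'}"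

end

theory Submission
  imports Defs
begin

text \<open>Conditionally on the simulations, the coverage at \<open>\<theta>\<close> is the probability that
  \<open>\<tau>(X, \<theta>)\<close> exceeds the \<open>\<alpha>\<close>-quantile \<open>Chat\<close> of \<open>Hhat(\<cdot> | \<theta>)\<close>. Whenever
  \<open>Hhat\<close> is uniformly \<open>\<epsilon>\<close>-close to the continuous distribution function \<open>H(\<cdot> | \<theta>)\<close>,
  both functions cross the level \<open>\<alpha>\<close> at the quantile up to \<open>\<epsilon>\<close>, so this conditional
  coverage is within \<open>\<epsilon>\<close> of \<open>1 - \<alpha>\<close>. By the consistency assumption this happens with
  probability tending to one, and since the conditional coverage is bounded, integrating it
  over the simulations (Fubini) gives convergence of the unconditional coverage.\<close>

lemma Inf_upclosed_ereal_le_iff_rat: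
  fixes F :: "real \<Rightarrow> bool"
  assumes mono: "\<And>t t'. t \<le> t' \<Longrightarrow> F t \<Longrightarrow> F t'"
  shows "Inf {ereal t | t. F t} \<le> ereal y \<longleftrightarrow> (\<forall>q::rat. y < of_rat q \<longrightarrow> F (of_rat q))"
proof
  assume le: "Inf {ereal t | t. F t} \<le> ereal y"
  show "\<forall>q::rat. y < of_rat q \<longrightarrow> F (of_rat q)"
  proof (intro allI impI)
    fix q :: rat assume "y < of_rat q"
    with le have "Inf {ereal t | t. F t} < ereal (of_rat q)" by (simp add: order_le_less_trans)
    then obtain t where "F t" "t < of_rat q" by (auto simp: Inf_less_iff)
    then show "F (of_rat q)" using mono[of t] by simp
  qed
next
  assume rat: "\<forall>q::rat. y < of_rat q \<longrightarrow> F (of_rat q)"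
  show "Inf {ereal t | t. F t} \<le> ereal y"
  proof (rule ereal_le_epsilon2)
    fix e :: real assume "0 < e"
    then obtain q where "q \<in> \<rat>" "y < q" "q < y + e" using Rats_dense_in_real by (meson less_add_same_cancel1)
    then obtain q' :: rat where "y < of_rat q'" "of_rat q' < y + e" by (auto elim: Rats_cases)
    with rat have "Inf {ereal t | t. F t} \<le> ereal (of_rat q')" by (intro Inf_lower) auto
    then show "Inf {ereal t | t. F t} \<le> ereal y + ereal e"
      using \<open>of_rat q' < y + e\<close> by (simp add: order_trans)
  qed
qed

lemma Inf_upclosed_ereal_finite:
  fixes F :: "real \<Rightarrow> bool"
  assumes mono: "\<And>t t'. t \<le> t' \<Longrightarrow> F t \<Longrightarrow> F t'" and "F t1" "\<not> F t0"
  obtains c where "Inf {ereal t | t. F t} = ereal c" "\<And>t. c < t \<Longrightarrow> F t" "\<And>t. t < c \<Longrightarrow> \<not> F t"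
proof -
  let ?C = "Inf {ereal t | t. F t}"
  have "?C \<le> ereal t1" using \<open>F t1\<close> by (intro Inf_lower) auto
  moreover have "ereal t0 \<le> ?C"
    using mono \<open>\<not> F t0\<close> by (intro Inf_greatest) (auto, meson linorder_le_cases)
  ultimately obtain c where C: "?C = ereal c" by (cases ?C) auto
  show ?thesis
  proof (rule that[OF C])
    fix t assume "c < t"
    then have "?C < ereal t" using C by simp
    then obtain t' where "F t'" "t' < t" unfolding Inf_less_iff by auto
    then show "F t" using mono[of t' t] by simp
  next
    fix t assume "t < c"
    then show "\<not> F t" using C Inf_lower[of "ereal t" "{ereal t | t. F t}"] by auto
  qed
qed

lemma continuous_on_ge_from_right:
  fixes f :: "real \<Rightarrow> real"
  assumes "continuous_on UNIV f" "\<And>t. c < t \<Longrightarrow> a \<le> f t"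
  shows "a \<le> f c"
proof (rule tendsto_lowerbound)
  show "(f \<longlongrightarrow> f c) (at_right c)"
    using assms(1) by (simp add: continuous_on_def filterlim_at_split)
  show "\<forall>\<^sub>F t in at_right c. a \<le> f t" using assms(2) by (intro eventually_at_rightI[of c "c + 1"]) auto
qed simp

lemma continuous_on_le_from_left:
  fixes f :: "real \<Rightarrow> real"
  assumes "continuous_on UNIV f" "\<And>t. t < c \<Longrightarrow> f t \<le> a"
  shows "f c \<le> a"
proof (rule tendsto_upperbound)
  show "(f \<longlongrightarrow> f c) (at_left c)"
    using assms(1) by (simp add: continuous_on_def filterlim_at_split)
  show "\<forall>\<^sub>F t in at_left c. f t \<le> a" using assms(2) by (intro eventually_at_leftI[of "c - 1"]) auto
qed simp

lemma (in prob_space) cdf_distr_eq_prob_le: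
  fixes f :: "'a \<Rightarrow> real"
  assumes "f \<in> borel_measurable M"
  shows "cdf (distr M borel f) = (\<lambda>t. prob {x\<in>space M. f x \<le> t})"
  using assms by (auto simp: cdf_def measure_distr vimage_def Int_def conj_commute)

lemma (in prob_space) prob_le_tendsto_at_bot:
  fixes f :: "'a \<Rightarrow> real"
  assumes "f \<in> borel_measurable M"
  shows "((\<lambda>t. prob {x\<in>space M. f x \<le> t}) \<longlongrightarrow> 0) at_bot"
proof -
  interpret D: real_distribution "distr M borel f" using assms by simp
  show ?thesis using D.cdf_lim_at_bot by (simp only: cdf_distr_eq_prob_le[OF assms])
qed

lemma (in prob_space) prob_le_tendsto_at_top:
  fixes f :: "'a \<Rightarrow> real"
  assumes "f \<in> borel_measurable M"
  shows "((\<lambda>t. prob {x\<in>space M. f x \<le> t}) \<longlongrightarrow> 1) at_top"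
proof -
  interpret D: real_distribution "distr M borel f" using assms by simp
  show ?thesis using D.cdf_lim_at_top_prob by (simp only: cdf_distr_eq_prob_le[OF assms])
qed

lemma (in prob_space) prob_ge_quantile_of_approx_cdf:
  fixes f :: "'a \<Rightarrow> real" and Hh :: "real \<Rightarrow> real"
  defines "H \<equiv> \<lambda>t. prob {x\<in>space M. f x \<le> t}"
  assumes f: "f \<in> borel_measurable M"
    and H_cont: "continuous_on UNIV H"
    and mono: "\<And>t t'. t \<le> t' \<Longrightarrow> Hh t \<le> Hh t'"
    and close: "\<And>t. \<bar>Hh t - H t\<bar> \<le> \<epsilon>"
    and \<epsilon>: "\<epsilon> < \<alpha>" "\<alpha> + \<epsilon> < 1"
  shows "\<bar>prob {x\<in>space M. Inf {ereal t | t. \<alpha> \<le> Hh t} \<le> ereal (f x)} - (1 - \<alpha>)\<bar> \<le> \<epsilon>"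
proof -
  have "\<forall>\<^sub>F t in at_top. \<alpha> + \<epsilon> < H t"
    using prob_le_tendsto_at_top[OF f] \<epsilon>(2) unfolding H_def by (rule order_tendstoD)
  then obtain t1 where "\<alpha> + \<epsilon> < H t1" by (auto simp: eventually_at_top_linorder)
  then have "\<alpha> \<le> Hh t1" using close[of t1] by linarith
  have "\<forall>\<^sub>F t in at_bot. H t < \<alpha> - \<epsilon>"
    using prob_le_tendsto_at_bot[OF f] \<epsilon>(1) unfolding H_def by (intro order_tendstoD) auto
  then obtain t0 where "H t0 < \<alpha> - \<epsilon>" by (auto simp: eventually_at_bot_linorder)
  then have "\<not> \<alpha> \<le> Hh t0" using close[of t0] by linarith
  have up: "\<alpha> \<le> Hh t'" if "t \<le> t'" "\<alpha> \<le> Hh t" for t t'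
    using mono[OF that(1)] that(2) by linarith
  obtain c where C: "Inf {ereal t | t. \<alpha> \<le> Hh t} = ereal c"
    and above: "\<And>t. c < t \<Longrightarrow> \<alpha> \<le> Hh t" and below: "\<And>t. t < c \<Longrightarrow> \<not> \<alpha> \<le> Hh t"
    by (rule Inf_upclosed_ereal_finite[of "\<lambda>t. \<alpha> \<le> Hh t" t1 t0])
      (use up \<open>\<alpha> \<le> Hh t1\<close> \<open>\<not> \<alpha> \<le> Hh t0\<close> in blast)+
  have le_event: "{x\<in>space M. f x \<le> t} \<in> events" and ge_event: "{x\<in>space M. t \<le> f x} \<in> events" for t
    using f by measurable
  have H_compl: "prob (space M - {x\<in>space M. f x \<le> t}) = 1 - H t" for t
    unfolding H_def by (rule prob_compl[OF le_event])
  have "\<alpha> - \<epsilon> \<le> H c"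
  proof (rule continuous_on_ge_from_right[OF H_cont])
    show "\<alpha> - \<epsilon> \<le> H t" if "c < t" for t using above[OF that] close[of t] by linarith
  qed
  moreover have "H c \<le> \<alpha> + \<epsilon>"
  proof (rule continuous_on_le_from_left[OF H_cont])
    show "H t \<le> \<alpha> + \<epsilon>" if "t < c" for t using below[OF that] close[of t] by linarith
  qed
  moreover have "prob {x\<in>space M. c \<le> f x} = 1 - H c"
  proof (rule antisym)
    have tail_le: "prob {x\<in>space M. c \<le> f x} \<le> 1 - H t" if "t < c" for t
    proof -
      have "prob {x\<in>space M. c \<le> f x} \<le> prob (space M - {x\<in>space M. f x \<le> t})"
        using that by (intro finite_measure_mono sets.Diff sets.top le_event) auto
      also have "\<dots> = 1 - H t" by (rule H_compl)
      finally show ?thesis .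
    qed
    \<comment> \<open>continuity of \<open>H\<close> at \<open>c\<close> excludes an atom of \<open>f\<close> at \<open>c\<close>\<close>
    have "H c \<le> 1 - prob {x\<in>space M. c \<le> f x}"
      by (rule continuous_on_le_from_left[OF H_cont]) (use tail_le in force)
    then show "prob {x\<in>space M. c \<le> f x} \<le> 1 - H c" by simp
    have "1 - H c = prob (space M - {x\<in>space M. f x \<le> c})" by (rule H_compl[symmetric])
    also have "\<dots> \<le> prob {x\<in>space M. c \<le> f x}"
      by (intro finite_measure_mono ge_event) auto
    finally show "1 - H c \<le> prob {x\<in>space M. c \<le> f x}" .
  qed
  ultimately show ?thesis unfolding C by simp
qed

lemma (in prob_space) abs_integral_diff_le_concentrated:
  fixes g :: "'a \<Rightarrow> real"
  assumes g: "g \<in> borel_measurable M"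
    and bounded: "\<And>x. x \<in> space M \<Longrightarrow> \<bar>g x - c\<bar> \<le> 1"
    and G: "G \<in> events" "1 - \<delta> \<le> prob G"
    and close: "\<And>x. x \<in> G \<Longrightarrow> \<bar>g x - c\<bar> \<le> \<epsilon>" and "0 \<le> \<epsilon>"
  shows "\<bar>(\<integral>x. g x \<partial>M) - c\<bar> \<le> \<epsilon> + \<delta>"
proof -
  have "\<bar>g x\<bar> \<le> \<bar>c\<bar> + 1" if "x \<in> space M" for x
    using bounded[OF that] by linarith
  then have int_g: "integrable M g"
    using g by (intro integrable_const_bound[where B = "\<bar>c\<bar> + 1"] AE_I2) auto
  have int_ind: "integrable M (indicator A :: 'a \<Rightarrow> real)" if "A \<in> events" for A
    using that by (simp add: emeasure_eq_measure)
  have "\<bar>(\<integral>x. g x \<partial>M) - c\<bar> = \<bar>\<integral>x. g x - c \<partial>M\<bar>"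
    using int_g by (simp add: prob_space)
  also have "\<dots> \<le> (\<integral>x. \<bar>g x - c\<bar> \<partial>M)"
    by (rule integral_abs_bound)
  also have "\<dots> \<le> (\<integral>x. \<epsilon> * indicator G x + indicator (space M - G) x \<partial>M)"
    using int_g int_ind G(1) close bounded \<open>0 \<le> \<epsilon>\<close>
    by (intro integral_mono) (auto split: split_indicator)
  also have "\<dots> = \<epsilon> * prob G + prob (space M - G)"
    using int_ind G(1) by simp
  also have "\<dots> \<le> \<epsilon> + \<delta>"
    using G prob_compl[OF G(1)] mult_left_le[OF prob_le_1[of G] \<open>0 \<le> \<epsilon>\<close>] by linarith
  finally show ?thesis .
qed

lemma integral_tendsto_if_concentrated:
  fixes g :: "nat \<Rightarrow> 'a \<Rightarrow> real"
  assumes prob: "\<And>n. prob_space (M n)"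
    and g: "\<And>n. g n \<in> borel_measurable (M n)"
    and bounded: "\<And>n x. x \<in> space (M n) \<Longrightarrow> \<bar>g n x - c\<bar> \<le> 1"
    and concentrated: "\<And>\<epsilon> \<delta>. 0 < \<epsilon> \<Longrightarrow> 0 < \<delta> \<Longrightarrow> \<exists>N. \<forall>n\<ge>N. \<exists>G\<in>sets (M n).
           1 - \<delta> \<le> measure (M n) G \<and> (\<forall>x\<in>G. \<bar>g n x - c\<bar> \<le> \<epsilon>)"
  shows "(\<lambda>n. \<integral>x. g n x \<partial>M n) \<longlonglongrightarrow> c"
proof (rule LIMSEQ_I)
  fix e :: real assume "0 < e"
  then obtain N where N: "\<And>n. n \<ge> N \<Longrightarrow> \<exists>G\<in>sets (M n).
      1 - e/3 \<le> measure (M n) G \<and> (\<forall>x\<in>G. \<bar>g n x - c\<bar> \<le> e/3)"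
    using concentrated[of "e/3" "e/3"] by auto
  have "norm ((\<integral>x. g n x \<partial>M n) - c) < e" if n: "n \<ge> N" for n
  proof -
    interpret prob_space "M n" by (rule prob)
    obtain G where "G \<in> events" "1 - e/3 \<le> prob G" "\<And>x. x \<in> G \<Longrightarrow> \<bar>g n x - c\<bar> \<le> e/3"
      using N[OF n] by blast
    then have "\<bar>(\<integral>x. g n x \<partial>M n) - c\<bar> \<le> e/3 + e/3"
      using \<open>0 < e\<close> g[of n] bounded[of _ n] by (intro abs_integral_diff_le_concentrated) auto
    then show ?thesis using \<open>0 < e\<close> by simp
  qed
  then show "\<exists>N. \<forall>n\<ge>N. norm ((\<integral>x. g n x \<partial>M n) - c) < e" by blast
qed

lemma (in prob_space) measurable_measure_Pair:
  assumes "E \<in> sets (N \<Otimes>\<^sub>M M)"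
  shows "(\<lambda>x. measure M (Pair x -` E)) \<in> borel_measurable N"
  unfolding measure_def by (intro borel_measurable_enn2real measurable_emeasure_Pair assms)

lemma (in prob_space) measure_pair_measure_eq_integral:
  assumes "finite_measure N" and E: "E \<in> sets (N \<Otimes>\<^sub>M M)"
  shows "measure (N \<Otimes>\<^sub>M M) E = (\<integral>x. measure M (Pair x -` E) \<partial>N)"
proof -
  interpret N: finite_measure N by (rule assms(1))
  have "integrable N (\<lambda>x. measure M (Pair x -` E))"
    by (intro N.integrable_const_bound[where B = 1] AE_I2 measurable_measure_Pair E) auto
  then have "emeasure (N \<Otimes>\<^sub>M M) E = ennreal (\<integral>x. measure M (Pair x -` E) \<partial>N)"
    unfolding emeasure_pair_measure_alt[OF E]
    by (subst nn_integral_eq_integral[symmetric]) (auto simp: emeasure_eq_measure)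
  then show ?thesis by (simp add: measure_def)
qed

lemma Hhat_mono:
  assumes "t \<le> t'"
  shows "Hhat \<tau> A B s t \<theta>' \<le> Hhat \<tau> A B s t' \<theta>'"
proof -
  have "card {b \<in> Iset A B s \<theta>'. \<tau> (snd (s b)) (fst (s b)) \<le> t}
      \<le> card {b \<in> Iset A B s \<theta>'. \<tau> (snd (s b)) (fst (s b)) \<le> t'}"
    using assms by (intro card_mono) (auto simp: Iset_def)
  then show ?thesis unfolding Hhat_def by (intro divide_right_mono) auto
qed

text \<open>Restricting to rational thresholds turns the event \<open>Chat \<le> y\<close> into a countable
  intersection, which makes the confidence set measurable.\<close>

lemma Chat_le_ereal_iff:
  "Chat \<tau> A \<alpha> B s \<theta>' \<le> ereal y \<longleftrightarrow>
     (\<forall>q::rat. y < of_rat q \<longrightarrow> \<alpha> \<le> Hhat \<tau> A B s (of_rat q) \<theta>')"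
  unfolding Chat_def by (rule Inf_upclosed_ereal_le_iff_rat) (meson Hhat_mono order_trans)

locale simulation_model =
  fixes \<Theta> :: "'t::euclidean_space set"
    and r :: "'t \<Rightarrow> real"
    and XM :: "'x measure"
    and P :: "'t \<Rightarrow> 'x measure"
    and \<tau> :: "'x \<Rightarrow> 't \<Rightarrow> real"
    and A :: "nat \<Rightarrow> (nat \<Rightarrow> 't \<times> 'x) \<Rightarrow> 't \<Rightarrow> 't set"
  assumes prior_prob: "prob_space (prior \<Theta> r)"
    and P_kernel: "P \<in> measurable (param_space \<Theta>) (prob_algebra XM)"
    and \<tau>_meas: "(\<lambda>(x, \<theta>'). \<tau> x \<theta>') \<in> borel_measurable (XM \<Otimes>\<^sub>M param_space \<Theta>)"
    and A_meas: "\<forall>B b \<theta>'. b < B \<longrightarrow> \<theta>' \<in> \<Theta> \<longrightarrow>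
          {s \<in> space (sims \<Theta> r XM P B). fst (s b) \<in> A B s \<theta>'} \<in> sets (sims \<Theta> r XM P B)"
begin

lemma space_param_space: "space (param_space \<Theta>) = \<Theta>"
  by (simp add: param_space_def space_restrict_space)

lemma prob_space_P: "\<theta> \<in> \<Theta> \<Longrightarrow> prob_space (P \<theta>)"
  and sets_P: "\<theta> \<in> \<Theta> \<Longrightarrow> sets (P \<theta>) = sets XM"
  using measurable_space[OF P_kernel, of \<theta>] by (auto simp: space_prob_algebra space_param_space)

lemma prob_space_joint: "prob_space (joint \<Theta> r XM P)"
  and sets_joint: "sets (joint \<Theta> r XM P) = sets (param_space \<Theta> \<Otimes>\<^sub>M XM)"
proof -
  have kernel: "(\<lambda>\<theta>. P \<theta> \<bind> (\<lambda>x. return (param_space \<Theta> \<Otimes>\<^sub>M XM) (\<theta>, x)))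
      \<in> param_space \<Theta> \<rightarrow>\<^sub>M prob_algebra (param_space \<Theta> \<Otimes>\<^sub>M XM)"
    by (rule measurable_bind_prob_space2[OF P_kernel])
      (simp add: case_prod_eta measurable_return_prob_space)
  have "prior \<Theta> r \<in> space (prob_algebra (param_space \<Theta>))"
    using prior_prob by (simp add: space_prob_algebra prior_def)
  from prob_space_bind'[OF this kernel] sets_bind'[OF this kernel]
  show "prob_space (joint \<Theta> r XM P)" "sets (joint \<Theta> r XM P) = sets (param_space \<Theta> \<Otimes>\<^sub>M XM)"
    by (simp_all add: joint_def)
qed

lemma prob_space_sims: "prob_space (sims \<Theta> r XM P B)"
  unfolding sims_def by (rule prob_space_PiM) (simp add: prob_space_joint)

lemma measurable_statistic_at:
  assumes "\<theta> \<in> \<Theta>"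
  shows "(\<lambda>x. \<tau> x \<theta>) \<in> borel_measurable (P \<theta>)"
proof -
  have "(\<lambda>x. (x, \<theta>)) \<in> XM \<rightarrow>\<^sub>M XM \<Otimes>\<^sub>M param_space \<Theta>"
    using assms by (simp add: space_param_space)
  from measurable_compose[OF this \<tau>_meas] show ?thesis
    using assms by (simp add: sets_P cong: measurable_cong_sets)
qed

lemma measurable_statistic_sim:
  assumes "b < B"
  shows "(\<lambda>s. \<tau> (snd (s b)) (fst (s b))) \<in> borel_measurable (sims \<Theta> r XM P B)"
proof -
  have "(\<lambda>p. \<tau> (snd p) (fst p)) \<in> borel_measurable (param_space \<Theta> \<Otimes>\<^sub>M XM)"
    using measurable_compose[OF measurable_pair_swap' \<tau>_meas] by (simp add: case_prod_beta)
  then have "(\<lambda>p. \<tau> (snd p) (fst p)) \<in> borel_measurable (joint \<Theta> r XM P)"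
    by (simp add: sets_joint cong: measurable_cong_sets)
  moreover have "(\<lambda>s. s b) \<in> sims \<Theta> r XM P B \<rightarrow>\<^sub>M joint \<Theta> r XM P"
    unfolding sims_def using assms by (intro measurable_component_singleton) simp
  ultimately show ?thesis by (rule measurable_compose[rotated])
qed

lemma measurable_Hhat:
  assumes "\<theta>' \<in> \<Theta>"
  shows "(\<lambda>s. Hhat \<tau> A B s t \<theta>') \<in> borel_measurable (sims \<Theta> r XM P B)"
proof -
  have [measurable]: "Measurable.pred (sims \<Theta> r XM P B) (\<lambda>s. fst (s b) \<in> A B s \<theta>')"
    "(\<lambda>s. \<tau> (snd (s b)) (fst (s b))) \<in> borel_measurable (sims \<Theta> r XM P B)" if "b < B" for b
    using A_meas assms that measurable_statistic_sim by (auto simp: pred_def)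
  have Hhat_eq: "(\<lambda>s. Hhat \<tau> A B s t \<theta>') = (\<lambda>s.
      ((\<Sum>b<B. of_bool (fst (s b) \<in> A B s \<theta>' \<and> \<tau> (snd (s b)) (fst (s b)) \<le> t)) + 1)
      / ((\<Sum>b<B. of_bool (fst (s b) \<in> A B s \<theta>')) + 1))"
    by (simp add: Hhat_def Iset_def Int_def lessThan_def conj_assoc)
  show ?thesis unfolding Hhat_eq by measurable
qed

definition conditional_coverage :: "real \<Rightarrow> nat \<Rightarrow> (nat \<Rightarrow> 't \<times> 'x) \<Rightarrow> 't \<Rightarrow> real" where
  "conditional_coverage \<alpha> B s \<theta> =
     measure (P \<theta>) {x \<in> space (P \<theta>). Chat \<tau> A \<alpha> B s \<theta> \<le> ereal (\<tau> x \<theta>)}"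

lemma coverage_event_sets:
  assumes "\<theta> \<in> \<Theta>"
  shows "{(s, x) \<in> space (sims \<Theta> r XM P B \<Otimes>\<^sub>M P \<theta>). \<theta> \<in> Rhat \<Theta> \<tau> A \<alpha> B s x}
           \<in> sets (sims \<Theta> r XM P B \<Otimes>\<^sub>M P \<theta>)"
proof -
  note [measurable] = measurable_Hhat[OF assms] measurable_statistic_at[OF assms]
  have event_eq: "{(s, x) \<in> space (sims \<Theta> r XM P B \<Otimes>\<^sub>M P \<theta>). \<theta> \<in> Rhat \<Theta> \<tau> A \<alpha> B s x} =
      {p \<in> space (sims \<Theta> r XM P B \<Otimes>\<^sub>M P \<theta>).
         \<forall>q::rat. \<tau> (snd p) \<theta> < of_rat q \<longrightarrow> \<alpha> \<le> Hhat \<tau> A B (fst p) (of_rat q) \<theta>}"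
    using assms by (auto simp: Rhat_def Chat_le_ereal_iff)
  show ?thesis unfolding event_eq by measurable
qed

lemma vimage_Pair_coverage_event:
  assumes "\<theta> \<in> \<Theta>" "s \<in> space (sims \<Theta> r XM P B)"
  shows "Pair s -` {(s, x) \<in> space (sims \<Theta> r XM P B \<Otimes>\<^sub>M P \<theta>). \<theta> \<in> Rhat \<Theta> \<tau> A \<alpha> B s x} =
           {x \<in> space (P \<theta>). Chat \<tau> A \<alpha> B s \<theta> \<le> ereal (\<tau> x \<theta>)}"
  using assms by (auto simp: Rhat_def space_pair_measure)

lemma measurable_conditional_coverage:
  assumes "\<theta> \<in> \<Theta>"
  shows "(\<lambda>s. conditional_coverage \<alpha> B s \<theta>) \<in> borel_measurable (sims \<Theta> r XM P B)"
proof -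
  interpret prob_space "P \<theta>" using assms by (rule prob_space_P)
  show ?thesis
    using measurable_measure_Pair[OF coverage_event_sets[OF assms, where \<alpha> = \<alpha>]]
    by (rule measurable_cong[THEN iffD1, rotated])
      (simp only: conditional_coverage_def vimage_Pair_coverage_event[OF assms])
qed

lemma measure_coverage_eq_integral:
  assumes "\<theta> \<in> \<Theta>"
  shows "measure (sims \<Theta> r XM P B \<Otimes>\<^sub>M P \<theta>)
           {(s, x) \<in> space (sims \<Theta> r XM P B \<Otimes>\<^sub>M P \<theta>). \<theta> \<in> Rhat \<Theta> \<tau> A \<alpha> B s x}
         = (\<integral>s. conditional_coverage \<alpha> B s \<theta> \<partial>sims \<Theta> r XM P B)"
proof -
  interpret prob_space "P \<theta>" using assms by (rule prob_space_P)
  interpret S: prob_space "sims \<Theta> r XM P B" by (rule prob_space_sims)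
  show ?thesis
    unfolding measure_pair_measure_eq_integral[OF S.finite_measure_axioms coverage_event_sets[OF assms]]
    by (intro Bochner_Integration.integral_cong refl)
      (simp only: conditional_coverage_def vimage_Pair_coverage_event[OF assms])
qed

lemma conditional_coverage_approx:
  assumes "\<theta> \<in> \<Theta>" "continuous_on UNIV (\<lambda>t. Hmodel P \<tau> t \<theta>)"
    and "\<And>t. \<bar>Hhat \<tau> A B s t \<theta> - Hmodel P \<tau> t \<theta>\<bar> \<le> \<epsilon>"
    and "\<epsilon> < \<alpha>" "\<alpha> + \<epsilon> < 1"
  shows "\<bar>conditional_coverage \<alpha> B s \<theta> - (1 - \<alpha>)\<bar> \<le> \<epsilon>"
proof -
  interpret prob_space "P \<theta>" using assms(1) by (rule prob_space_P)
  show ?thesis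
    unfolding conditional_coverage_def Chat_def
    by (rule prob_ge_quantile_of_approx_cdf[OF measurable_statistic_at[OF assms(1)]])
      (use assms in \<open>simp_all add: Hmodel_def Hhat_mono\<close>)
qed

lemma conditional_coverage_concentrated:
  assumes "\<theta> \<in> \<Theta>" "continuous_on UNIV (\<lambda>t. Hmodel P \<tau> t \<theta>)" "0 < \<alpha>" "\<alpha> < 1"
    and consistency: "\<forall>\<epsilon>>0. \<forall>\<delta>>0. \<exists>B0. \<forall>B\<ge>B0.
          measure (sims \<Theta> r XM P B)
            {s \<in> space (sims \<Theta> r XM P B).
               \<forall>t. \<forall>\<theta>'\<in>\<Theta>. \<bar>Hhat \<tau> A B s t \<theta>' - Hmodel P \<tau> t \<theta>'\<bar> \<le> \<epsilon>} \<ge> 1 - \<delta>"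
    and "0 < \<epsilon>" "0 < \<delta>"
  shows "\<exists>B0. \<forall>B\<ge>B0. \<exists>G\<in>sets (sims \<Theta> r XM P B). 1 - \<delta> \<le> measure (sims \<Theta> r XM P B) G \<and>
           (\<forall>s\<in>G. \<bar>conditional_coverage \<alpha> B s \<theta> - (1 - \<alpha>)\<bar> \<le> \<epsilon>)"
proof -
  define \<epsilon>' where "\<epsilon>' = min \<epsilon> (min (\<alpha>/2) ((1 - \<alpha>)/2))"
  define \<delta>' where "\<delta>' = min \<delta> (1/2)"
  have "0 < \<epsilon>'" "\<epsilon>' \<le> \<epsilon>" "\<epsilon>' < \<alpha>" "\<alpha> + \<epsilon>' < 1" "0 < \<delta>'" "\<delta>' \<le> \<delta>" "\<delta>' < 1"
    using assms by (auto simp: \<epsilon>'_def \<delta>'_def min_def field_simps)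
  then obtain B0 where B0: "\<And>B. B \<ge> B0 \<Longrightarrow> 1 - \<delta>' \<le> measure (sims \<Theta> r XM P B)
      {s \<in> space (sims \<Theta> r XM P B). \<forall>t. \<forall>\<theta>'\<in>\<Theta>. \<bar>Hhat \<tau> A B s t \<theta>' - Hmodel P \<tau> t \<theta>'\<bar> \<le> \<epsilon>'}"
    using consistency by blast
  have "\<exists>G\<in>sets (sims \<Theta> r XM P B). 1 - \<delta> \<le> measure (sims \<Theta> r XM P B) G \<and>
           (\<forall>s\<in>G. \<bar>conditional_coverage \<alpha> B s \<theta> - (1 - \<alpha>)\<bar> \<le> \<epsilon>)" if "B \<ge> B0" for B
  proof (intro bexI conjI ballI)
    let ?G = "{s \<in> space (sims \<Theta> r XM P B).
                \<forall>t. \<forall>\<theta>'\<in>\<Theta>. \<bar>Hhat \<tau> A B s t \<theta>' - Hmodel P \<tau> t \<theta>'\<bar> \<le> \<epsilon>'}"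
    show "1 - \<delta> \<le> measure (sims \<Theta> r XM P B) ?G"
      using B0[OF that] \<open>\<delta>' \<le> \<delta>\<close> by linarith
    \<comment> \<open>measurability is not assumed, but a non-measurable set would have measure 0\<close>
    show "?G \<in> sets (sims \<Theta> r XM P B)"
      using B0[OF that] \<open>\<delta>' < 1\<close> measure_notin_sets[of ?G] by fastforce
    show "\<bar>conditional_coverage \<alpha> B s \<theta> - (1 - \<alpha>)\<bar> \<le> \<epsilon>" if "s \<in> ?G" for s
      using conditional_coverage_approx[OF assms(1,2) _ \<open>\<epsilon>' < \<alpha>\<close> \<open>\<alpha> + \<epsilon>' < 1\<close>, of B s]
        that assms(1) \<open>\<epsilon>' \<le> \<epsilon>\<close> by fastforce
  qed
  then show ?thesis by blast
qed

end

theorem theorem3: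
  fixes \<Theta> :: "'t::euclidean_space set"
    and r :: "'t \<Rightarrow> real"
    and XM :: "'x measure"
    and P :: "'t \<Rightarrow> 'x measure"
    and \<tau> :: "'x \<Rightarrow> 't \<Rightarrow> real"
    and A :: "nat \<Rightarrow> (nat \<Rightarrow> 't \<times> 'x) \<Rightarrow> 't \<Rightarrow> 't set"
    and \<alpha> :: real
    and \<theta> :: 't
  assumes \<Theta>_borel: "\<Theta> \<in> sets borel"
    and r_meas: "r \<in> borel_measurable (param_space \<Theta>)"
    and r_pos: "\<forall>\<theta>'\<in>\<Theta>. r \<theta>' > 0"
    and prior_prob: "prob_space (prior \<Theta> r)"
    and P_kernel: "P \<in> measurable (param_space \<Theta>) (prob_algebra XM)"
    and \<tau>_meas: "(\<lambda>(x, \<theta>'). \<tau> x \<theta>') \<in> borel_measurable (XM \<Otimes>\<^sub>M param_space \<Theta>)"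
    and H_cont: "\<forall>\<theta>'\<in>\<Theta>. continuous_on UNIV (\<lambda>t. Hmodel P \<tau> t \<theta>')"
    and \<alpha>_range: "0 < \<alpha>" "\<alpha> < 1"
    and A_partition: "\<forall>B. \<forall>s\<in>space (sims \<Theta> r XM P B). \<forall>\<theta>'\<in>\<Theta>.
          \<theta>' \<in> A B s \<theta>' \<and> A B s \<theta>' \<subseteq> \<Theta> \<and> (\<forall>\<theta>''\<in>A B s \<theta>'. A B s \<theta>'' = A B s \<theta>')"
    and A_meas: "\<forall>B b \<theta>'. b < B \<longrightarrow> \<theta>' \<in> \<Theta> \<longrightarrow>
          {s \<in> space (sims \<Theta> r XM P B). fst (s b) \<in> A B s \<theta>'} \<in> sets (sims \<Theta> r XM P B)"
    and consistency: "\<forall>\<epsilon>>0. \<forall>\<delta>>0. \<exists>B0. \<forall>B\<ge>B0.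
          measure (sims \<Theta> r XM P B)
            {s \<in> space (sims \<Theta> r XM P B).
               \<forall>t. \<forall>\<theta>'\<in>\<Theta>. \<bar>Hhat \<tau> A B s t \<theta>' - Hmodel P \<tau> t \<theta>'\<bar> \<le> \<epsilon>} \<ge> 1 - \<delta>"
    and \<theta>_in: "\<theta> \<in> \<Theta>"
  shows "(\<lambda>B. measure (sims \<Theta> r XM P B \<Otimes>\<^sub>M P \<theta>)
            {(s, x) \<in> space (sims \<Theta> r XM P B \<Otimes>\<^sub>M P \<theta>). \<theta> \<in> Rhat \<Theta> \<tau> A \<alpha> B s x})
         \<longlonglongrightarrow> 1 - \<alpha>"
proof -
  interpret simulation_model \<Theta> r XM P \<tau> A
    by (rule simulation_model.intro) (fact prior_prob P_kernel \<tau>_meas A_meas)+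
  have bounded: "\<bar>conditional_coverage \<alpha> B s \<theta> - (1 - \<alpha>)\<bar> \<le> 1" for B s
  proof -
    have "0 \<le> conditional_coverage \<alpha> B s \<theta>" "conditional_coverage \<alpha> B s \<theta> \<le> 1"
      unfolding conditional_coverage_def by (simp_all add: prob_space.prob_le_1[OF prob_space_P[OF \<theta>_in]])
    then show ?thesis using \<alpha>_range by (simp add: abs_le_iff)
  qed
  show ?thesis
    unfolding measure_coverage_eq_integral[OF \<theta>_in]
    by (rule integral_tendsto_if_concentrated[OF prob_space_sims measurable_conditional_coverage[OF \<theta>_in]
          bounded conditional_coverage_concentrated[OF \<theta>_in _ \<alpha>_range consistency]])
      (use H_cont \<theta>_in in auto)
qed

end
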